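(* Let $\mathcal C$ be a linear $[n,k]$ MDS code over $F=\mathrm{GF}(q)$ with $k<n$, and let $L\in\mathbb Z^+$ satisfy $L<\binom{n}{k}$. If $q\ge\binom{n}{k+1}$, then $\mathcal C$ is not $(n-k,L)$-list decodable.
   Context: For $L\in\mathbb Z^+$ and $\tau\in\mathbb Z_{\ge0}$, a code $\mathcal C\subseteq F^n$ is $(\tau,L)$-list decodable if for every $y\in F^n$ at most $L$ codewords of $\mathcal C$ lie at Hamming distance at most $\tau$ from $y$. *)

theory Defs
  imports Main
begin

text \<open>Vectors of F^n are represented as functions nat => F vanishing outside {0..<n}.\<close>

definition vecs :: "nat \<Rightarrow> (nat \<Rightarrow> 'a::zero) set" where
  "vecs n = {x. \<forall>i\<ge>n. x i = 0}"

definition hamming_dist :: "nat \<Rightarrow> (nat \<Rightarrow> 'a) \<Rightarrow> (nat \<Rightarrow> 'a) \<Rightarrow> nat" where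
  "hamming_dist n x y = card {i. i < n \<and> x i \<noteq> y i}"

definition encode :: "nat \<Rightarrow> nat \<Rightarrow> (nat \<Rightarrow> nat \<Rightarrow> 'a::comm_ring_1) \<Rightarrow> (nat \<Rightarrow> 'a) \<Rightarrow> (nat \<Rightarrow> 'a)" where
  "encode n k G u = (\<lambda>j. if j < n then (\<Sum>i<k. u i * G i j) else 0)"

text \<open>C is a linear [n,k] code over the field F: the image of F^k under an injective
  linear map given by a generator matrix (i.e. a k-dimensional subspace of F^n).\<close>
definition linear_code :: "nat \<Rightarrow> nat \<Rightarrow> (nat \<Rightarrow> 'a::field) set \<Rightarrow> bool" where
  "linear_code n k C \<longleftrightarrow> (\<exists>G. inj_on (encode n k G) (vecs k) \<and> C = encode n k G ` vecs k)"

definition min_distance :: "nat \<Rightarrow> (nat \<Rightarrow> 'a) set \<Rightarrow> nat" where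
  "min_distance n C = Min {hamming_dist n x y | x y. x \<in> C \<and> y \<in> C \<and> x \<noteq> y}"

definition MDS_code :: "nat \<Rightarrow> nat \<Rightarrow> (nat \<Rightarrow> 'a::field) set \<Rightarrow> bool" where
  "MDS_code n k C \<longleftrightarrow> linear_code n k C \<and> min_distance n C = n - k + 1"

definition list_decodable :: "nat \<Rightarrow> (nat \<Rightarrow> 'a::zero) set \<Rightarrow> nat \<Rightarrow> nat \<Rightarrow> bool" where
  "list_decodable n C \<tau> L \<longleftrightarrow>
     (\<forall>y\<in>vecs n. card {c \<in> C. hamming_dist n c y \<le> \<tau>} \<le> L)"

end

theory Submission
  imports Defs "HOL-Library.FuncSet"
begin

text \<open>An MDS code of dimension k is determined by any k coordinates, and since it has
  q^k codewords, every pattern on any k coordinates is realised by a codeword.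
  Choose y greedily, one coordinate at a time, so that no codeword agrees with y on
  k+1 coordinates: at coordinate m at most C(m,k) values are forced by codewords agreeing
  with y on k earlier coordinates, and q > C(n-1,k) (Pascal's rule applied to
  q >= C(n,k+1)) leaves a free value. Then the codewords agreeing with y on the C(n,k)
  different k-sets are pairwise distinct and all lie within distance n-k of y.\<close>

lemma restrict_eq_iff: "restrict f A = restrict g A \<longleftrightarrow> (\<forall>x\<in>A. f x = g x)"
  by (metis restrict_apply' restrict_ext)

lemma hamming_dist_le: "hamming_dist n x y \<le> n"
  unfolding hamming_dist_def by (rule order.trans[OF card_mono[of "{..<n}"]]) auto

lemma hamming_dist_le_if_agree:
  assumes "S \<subseteq> {..<n}" and "\<forall>i\<in>S. x i = y i"
  shows "hamming_dist n x y \<le> n - card S"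
proof -
  have "hamming_dist n x y \<le> card ({..<n} - S)"
    unfolding hamming_dist_def using assms(2) by (intro card_mono) auto
  also have "\<dots> = n - card S"
    using assms(1) by (simp add: card_Diff_subset finite_subset)
  finally show ?thesis .
qed

lemma bij_betw_restrict_vecs:
  "bij_betw (\<lambda>x. restrict x {..<k}) (vecs k :: (nat \<Rightarrow> 'a::zero) set) (PiE {..<k} (\<lambda>_. UNIV))"
proof (rule bij_betw_imageI)
  show "inj_on (\<lambda>x. restrict x {..<k}) (vecs k :: (nat \<Rightarrow> 'a) set)"
  proof (rule inj_onI, rule ext)
    fix x y :: "nat \<Rightarrow> 'a" and i
    assume "x \<in> vecs k" "y \<in> vecs k" "restrict x {..<k} = restrict y {..<k}"
    then show "x i = y i" by (cases "i < k") (auto simp: vecs_def restrict_eq_iff)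
  qed
  show "(\<lambda>x. restrict x {..<k}) ` (vecs k :: (nat \<Rightarrow> 'a) set) = PiE {..<k} (\<lambda>_. UNIV)"
  proof (intro equalityI)
    show "(\<lambda>x. restrict x {..<k}) ` (vecs k :: (nat \<Rightarrow> 'a) set) \<subseteq> PiE {..<k} (\<lambda>_. UNIV)"
      by (rule image_subsetI) (simp add: restrict_PiE_iff)
  next
    show "PiE {..<k} (\<lambda>_. UNIV) \<subseteq> (\<lambda>x. restrict x {..<k}) ` (vecs k :: (nat \<Rightarrow> 'a) set)"
    proof
      fix g assume g: "g \<in> PiE {..<k} (\<lambda>_. UNIV :: 'a set)"
      have "(\<lambda>i. if i < k then g i else 0) \<in> vecs k" by (simp add: vecs_def)
      moreover have "restrict (\<lambda>i. if i < k then g i else 0) {..<k} = restrict g {..<k}"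
        by (simp add: restrict_eq_iff)
      ultimately show "g \<in> (\<lambda>x. restrict x {..<k}) ` vecs k"
        using PiE_restrict[OF g] by (intro image_eqI[of g]) simp_all
    qed
  qed
qed

lemma finite_vecs: "finite (vecs k :: (nat \<Rightarrow> 'a::{finite,zero}) set)"
  by (rule bij_betw_finite[OF bij_betw_restrict_vecs, THEN iffD2]) (simp add: finite_PiE)

lemma card_vecs: "card (vecs k :: (nat \<Rightarrow> 'a::{finite,zero}) set) = card (UNIV :: 'a set) ^ k"
  using bij_betw_same_card[OF bij_betw_restrict_vecs] by (simp add: card_PiE)

definition determined_by_k_coords :: "nat \<Rightarrow> nat \<Rightarrow> (nat \<Rightarrow> 'a) set \<Rightarrow> bool" where
  "determined_by_k_coords n k C \<longleftrightarrow>
     (\<forall>c\<in>C. \<forall>c'\<in>C. \<forall>S. S \<subseteq> {..<n} \<and> card S = k \<and> (\<forall>i\<in>S. c i = c' i) \<longrightarrow> c = c')"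

lemma determined_by_k_coordsD:
  "determined_by_k_coords n k C \<Longrightarrow> c \<in> C \<Longrightarrow> c' \<in> C \<Longrightarrow> S \<subseteq> {..<n} \<Longrightarrow> card S = k
    \<Longrightarrow> \<forall>i\<in>S. c i = c' i \<Longrightarrow> c = c'"
  unfolding determined_by_k_coords_def by blast

lemma determined_by_k_coords_mono:
  "determined_by_k_coords n k C \<Longrightarrow> m \<le> n \<Longrightarrow> determined_by_k_coords m k C"
  unfolding determined_by_k_coords_def by (meson lessThan_subset_iff order_trans)

lemma linear_code_finite_card:
  assumes "linear_code n k (C :: (nat \<Rightarrow> 'a::{finite,field}) set)"
  shows "finite C" and "card C = card (UNIV :: 'a set) ^ k"
proof -
  obtain G where "inj_on (encode n k G) (vecs k)" and C: "C = encode n k G ` vecs k"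
    using assms unfolding linear_code_def by blast
  then show "finite C" and "card C = card (UNIV :: 'a set) ^ k"
    by (simp_all add: finite_vecs card_image card_vecs)
qed

lemma MDS_code_determined_by_k_coords:
  assumes "MDS_code n k C"
  shows "determined_by_k_coords n k C"
  unfolding determined_by_k_coords_def
proof (intro ballI allI impI)
  fix c c' S assume c: "c \<in> C" "c' \<in> C"
    and S: "S \<subseteq> {..<n} \<and> card S = k \<and> (\<forall>i\<in>S. c i = c' i)"
  show "c = c'"
  proof (rule ccontr)
    assume "c \<noteq> c'"
    have "finite {hamming_dist n x y | x y. x \<in> C \<and> y \<in> C \<and> x \<noteq> y}"
      by (rule finite_subset[of _ "{..n}"]) (auto simp: hamming_dist_le)
    then have "min_distance n C \<le> hamming_dist n c c'"
      unfolding min_distance_def using \<open>c \<noteq> c'\<close> c by (intro Min_le) auto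
    also have "\<dots> \<le> n - k"
      using hamming_dist_le_if_agree[of S n c c'] S by simp
    finally show False using assms unfolding MDS_code_def by simp
  qed
qed

lemma exists_codeword_agreeing_on:
  fixes C :: "(nat \<Rightarrow> 'a::finite) set"
  assumes "finite S" and inj: "inj_on (\<lambda>c. restrict c S) C"
    and card: "card C = card (UNIV :: 'a set) ^ card S"
  shows "\<exists>c\<in>C. \<forall>i\<in>S. c i = y i"
proof -
  have sub: "(\<lambda>c. restrict c S) ` C \<subseteq> PiE S (\<lambda>_. UNIV)"
    by (rule image_subsetI) (simp add: restrict_PiE_iff)
  have "card ((\<lambda>c. restrict c S) ` C) = card (PiE S (\<lambda>_. UNIV :: 'a set))"
    using card_image[OF inj] card \<open>finite S\<close> by (simp add: card_PiE)
  then have "(\<lambda>c. restrict c S) ` C = PiE S (\<lambda>_. UNIV)"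
    using card_subset_eq[OF _ sub] \<open>finite S\<close> by (simp add: finite_PiE)
  moreover have "restrict y S \<in> PiE S (\<lambda>_. UNIV)" by (simp add: restrict_PiE_iff)
  ultimately obtain c where "c \<in> C" and "restrict y S = restrict c S" by (metis imageE)
  then show ?thesis by (metis restrict_eq_iff)
qed

subsection \<open>A word agreeing with no codeword on k+1 coordinates\<close>

lemma card_forced_values_le:
  fixes C :: "(nat \<Rightarrow> 'a::finite) set"
  assumes "determined_by_k_coords m k C"
  shows "card {c m | c S. c \<in> C \<and> S \<subseteq> {..<m} \<and> card S = k \<and> (\<forall>i\<in>S. c i = y i)}
           \<le> m choose k"
proof -
  define Sets where "Sets = {S. S \<subseteq> {..<m} \<and> card S = k}"
  define forced where "forced S = {c m | c. c \<in> C \<and> (\<forall>i\<in>S. c i = y i)}" for S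
  have forced_le_1: "card (forced S) \<le> 1" if "S \<in> Sets" for S
  proof -
    have "\<forall>a\<in>forced S. \<forall>b\<in>forced S. a = b"
      using determined_by_k_coordsD[OF assms, of _ _ S] that unfolding forced_def Sets_def
      by fastforce
    then show ?thesis by (simp add: card_le_Suc0_iff_eq)
  qed
  have "{c m | c S. c \<in> C \<and> S \<subseteq> {..<m} \<and> card S = k \<and> (\<forall>i\<in>S. c i = y i)}
          = (\<Union>S\<in>Sets. forced S)"
    unfolding Sets_def forced_def by blast
  also have "card \<dots> \<le> (\<Sum>S\<in>Sets. card (forced S))"
    by (rule card_UN_le) (simp add: Sets_def)
  also have "\<dots> \<le> (\<Sum>S\<in>Sets. 1)" by (rule sum_mono[OF forced_le_1])
  also have "\<dots> = m choose k" by (simp add: Sets_def n_subsets)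
  finally show ?thesis .
qed

definition no_Suc_k_agreement :: "nat \<Rightarrow> nat \<Rightarrow> (nat \<Rightarrow> 'a) set \<Rightarrow> (nat \<Rightarrow> 'a) \<Rightarrow> bool" where
  "no_Suc_k_agreement m k C y \<longleftrightarrow>
     (\<forall>c\<in>C. \<forall>U. U \<subseteq> {..<m} \<and> card U = Suc k \<longrightarrow> \<not> (\<forall>i\<in>U. c i = y i))"

lemma no_Suc_k_agreement_extend:
  fixes C :: "(nat \<Rightarrow> 'a::finite) set"
  assumes det: "determined_by_k_coords m k C" and q: "m choose k < card (UNIV :: 'a set)"
    and y: "no_Suc_k_agreement m k C y"
  obtains t where "no_Suc_k_agreement (Suc m) k C (y(m := t))"
proof -
  define V where "V = {c m | c S. c \<in> C \<and> S \<subseteq> {..<m} \<and> card S = k \<and> (\<forall>i\<in>S. c i = y i)}"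
  have "card V < card (UNIV :: 'a set)"
    using card_forced_values_le[OF det, of y] q unfolding V_def by simp
  then have "V \<noteq> UNIV" by auto
  then obtain t where t: "t \<notin> V" by blast
  have "no_Suc_k_agreement (Suc m) k C (y(m := t))"
    unfolding no_Suc_k_agreement_def
  proof (intro ballI allI impI notI)
    fix c U assume c: "c \<in> C" and U: "U \<subseteq> {..<Suc m} \<and> card U = Suc k"
      and agree: "\<forall>i\<in>U. c i = (y(m := t)) i"
    show False
    proof (cases "m \<in> U")
      case False
      then have "U \<subseteq> {..<m}" using U by (auto simp: less_Suc_eq)
      moreover have "\<forall>i\<in>U. c i = y i" using agree False by auto
      ultimately show False using y c U unfolding no_Suc_k_agreement_def by blast
    next
      case True
      have "U - {m} \<subseteq> {..<m}" using U by (auto simp: less_Suc_eq)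
      moreover have "card (U - {m}) = k" using U True by simp
      moreover have "\<forall>i\<in>U - {m}. c i = y i" using agree by auto
      ultimately have "c m \<in> V" unfolding V_def using c by blast
      moreover have "c m = t" using agree True by simp
      ultimately show False using t by simp
    qed
  qed
  then show thesis by (rule that)
qed

lemma exists_word_no_Suc_k_agreement:
  fixes C :: "(nat \<Rightarrow> 'a::{finite,zero}) set"
  assumes det: "determined_by_k_coords n k C" and q: "(n - 1) choose k < card (UNIV :: 'a set)"
    and "m \<le> n"
  shows "\<exists>y\<in>vecs n. no_Suc_k_agreement m k C y"
  using \<open>m \<le> n\<close>
proof (induction m)
  case 0
  have "(\<lambda>_. 0) \<in> vecs n" by (simp add: vecs_def)
  then show ?case by (auto simp: no_Suc_k_agreement_def)
next
  case (Suc m)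
  then obtain y where "y \<in> vecs n" and y: "no_Suc_k_agreement m k C y" by auto
  have "m choose k \<le> (n - 1) choose k" using Suc.prems by (simp add: binomial_right_mono)
  then have "m choose k < card (UNIV :: 'a set)" using q by linarith
  moreover have "determined_by_k_coords m k C"
    using determined_by_k_coords_mono[OF det] Suc.prems by simp
  ultimately obtain t where "no_Suc_k_agreement (Suc m) k C (y(m := t))"
    using no_Suc_k_agreement_extend y by blast
  moreover have "y(m := t) \<in> vecs n" using \<open>y \<in> vecs n\<close> Suc.prems by (simp add: vecs_def)
  ultimately show ?case by blast
qed

subsection \<open>Many codewords close to such a word\<close>

lemma exists_Suc_subset_of_Un:
  assumes "finite S" "finite T" "card S = k" "card T = k" "S \<noteq> T"
  obtains U where "U \<subseteq> S \<union> T" "card U = Suc k"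
proof -
  have "\<not> T \<subseteq> S" using assms card_subset_eq by metis
  then have "card S < card (S \<union> T)" using assms by (intro psubset_card_mono) auto
  then show thesis using that obtain_subset_with_card_n[of "Suc k" "S \<union> T"] assms(3) by auto
qed

lemma choose_le_card_close_codewords:
  fixes C :: "(nat \<Rightarrow> 'a::finite) set"
  assumes det: "determined_by_k_coords n k C"
    and fin: "finite C" and card: "card C = card (UNIV :: 'a set) ^ k"
    and y: "no_Suc_k_agreement n k C y"
  shows "n choose k \<le> card {c \<in> C. hamming_dist n c y \<le> n - k}"
proof -
  define Sets where "Sets = {S. S \<subseteq> {..<n} \<and> card S = k}"
  have "\<exists>c\<in>C. \<forall>i\<in>S. c i = y i" if "S \<in> Sets" for S
  proof (rule exists_codeword_agreeing_on)
    have S: "S \<subseteq> {..<n}" "card S = k" using that unfolding Sets_def by auto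
    show "finite S" using S(1) finite_subset by blast
    show "inj_on (\<lambda>c. restrict c S) C"
    proof (rule inj_onI)
      fix c c' assume "c \<in> C" "c' \<in> C" "restrict c S = restrict c' S"
      then show "c = c'" using determined_by_k_coordsD[OF det _ _ S] by (simp add: restrict_eq_iff)
    qed
    show "card C = card (UNIV :: 'a set) ^ card S" using card S(2) by simp
  qed
  then obtain g where g: "\<And>S. S \<in> Sets \<Longrightarrow> g S \<in> C \<and> (\<forall>i\<in>S. g S i = y i)" by metis
  have "inj_on g Sets"
  proof (rule inj_onI, rule ccontr)
    fix S T assume S: "S \<in> Sets" and T: "T \<in> Sets" and "g S = g T" "S \<noteq> T"
    have "finite S" "finite T" "card S = k" "card T = k"
      using S T unfolding Sets_def by (auto intro: finite_subset)
    then obtain U where U: "U \<subseteq> S \<union> T" "card U = Suc k"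
      using exists_Suc_subset_of_Un \<open>S \<noteq> T\<close> by metis
    then have "\<forall>i\<in>U. g S i = y i" using g[OF S] g[OF T] \<open>g S = g T\<close> by auto
    moreover have "U \<subseteq> {..<n}" using U(1) S T unfolding Sets_def by auto
    ultimately show False using y g[OF S] U(2) unfolding no_Suc_k_agreement_def by blast
  qed
  have close: "g ` Sets \<subseteq> {c \<in> C. hamming_dist n c y \<le> n - k}"
  proof
    fix c assume "c \<in> g ` Sets"
    then obtain S where "S \<in> Sets" and "c = g S" by blast
    then show "c \<in> {c \<in> C. hamming_dist n c y \<le> n - k}"
      using g hamming_dist_le_if_agree[of S n "g S" y] by (simp add: Sets_def)
  qed
  have "n choose k = card Sets" by (simp add: Sets_def n_subsets)
  also have "\<dots> = card (g ` Sets)" using \<open>inj_on g Sets\<close> by (simp add: card_image)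
  also have "\<dots> \<le> card {c \<in> C. hamming_dist n c y \<le> n - k}"
    using close fin by (intro card_mono) simp_all
  finally show ?thesis .
qed

lemma choose_pred_less_card:
  fixes k n q :: nat
  assumes "k < n" and "n choose (k + 1) \<le> q" and "2 \<le> q"
  shows "(n - 1) choose k < q"
proof -
  obtain m where n: "n = Suc m" using assms(1) by (cases n) auto
  show ?thesis
  proof (cases "k < m")
    case True
    have "n choose (k + 1) = (m choose k) + (m choose (k + 1))" by (simp add: n)
    moreover have "0 < m choose (k + 1)" using True by simp
    ultimately have "m choose k < q" using assms(2) by linarith
    then show ?thesis by (simp add: n)
  next
    case False
    then have "k = m" using assms(1) n by simp
    then show ?thesis using assms(3) n by simp
  qed
qed

lemma two_le_card_field: "2 \<le> card (UNIV :: 'a::{finite,field} set)"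
proof -
  have "card {0::'a, 1} \<le> card (UNIV :: 'a set)" by (rule card_mono) auto
  then show ?thesis by simp
qed

theorem mainTheorem6:
  fixes C :: "(nat \<Rightarrow> 'a::{finite,field}) set" and n k L :: nat
  assumes "MDS_code n k C"
    and "k < n"
    and "0 < L" and "L < n choose k"
    and "card (UNIV :: 'a set) \<ge> n choose (k + 1)"
  shows "\<not> list_decodable n C (n - k) L"
proof
  assume decodable: "list_decodable n C (n - k) L"
  have det: "determined_by_k_coords n k C" by (rule MDS_code_determined_by_k_coords[OF assms(1)])
  have linear: "linear_code n k C" using assms(1) unfolding MDS_code_def by simp
  have "(n - 1) choose k < card (UNIV :: 'a set)"
    using choose_pred_less_card[OF assms(2) assms(5) two_le_card_field] .
  then obtain y where "y \<in> vecs n" and y: "no_Suc_k_agreement n k C y"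
    using exists_word_no_Suc_k_agreement[OF det] by blast
  have "n choose k \<le> card {c \<in> C. hamming_dist n c y \<le> n - k}"
    using choose_le_card_close_codewords[OF det linear_code_finite_card[OF linear] y] .
  also have "\<dots> \<le> L" using decodable \<open>y \<in> vecs n\<close> unfolding list_decodable_def by blast
  finally show False using assms(4) by simp
qed

end
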